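(* Let $g\in\mathbb Y$ and let $\hat x_\alpha\in R_\alpha(g)$, $\alpha>0$, be any selection. Define $\vartheta_g:(0,\infty)\to\mathbb R$ by $\vartheta_g(\alpha):=\inf_{x\in\mathrm{dom}(\mathcal R)}T_\alpha(x,g)=\frac1{2\alpha}\|g-A\hat x_\alpha\|^2_{\mathbb Y}+\mathcal R(\hat x_\alpha)$. Then $\vartheta_g$ is convex, non-increasing and continuously differentiable with $$\vartheta_g'(\alpha)=-\frac1{2\alpha^2}\|g-A\hat x_\alpha\|_{\mathbb Y}^2\quad\text{for all }\alpha>0.$$
   Context: Standing setting: $\mathbb X$ real Banach space, $\tau$ a topology with $(\mathbb X,\tau)$ locally convex Hausdorff; $\mathcal R:\mathbb X\to(-\infty,\infty]$ proper convex with $\tau$-compact sublevel sets $\{\mathcal R\le\lambda\}$; $\mathbb Y$ real Hilbert space; $A:\mathbb X\to\mathbb Y$ linear, $\tau$-to-weak continuous. $T_\alpha(x,g):=\frac1{2\alpha}\|g-Ax\|_{\mathbb Y}^2+\mathcal R(x)$, $R_\alpha(g):=\operatorname{argmin}_{x\in\mathrm{dom}(\mathcal R)}T_\alpha(x,g)$ (nonempty). *)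

theory Defs
  imports "HOL-Analysis.Analysis"
begin

definition tvs_topology :: "'a::real_vector topology \<Rightarrow> bool" where
  "tvs_topology \<tau> \<longleftrightarrow> topspace \<tau> = UNIV
     \<and> continuous_map (prod_topology \<tau> \<tau>) \<tau> (\<lambda>(x, y). x + y)
     \<and> continuous_map (prod_topology euclideanreal \<tau>) \<tau> (\<lambda>(c, x). c *\<^sub>R x)"

definition locally_convex_hausdorff :: "'a::real_vector topology \<Rightarrow> bool" where
  "locally_convex_hausdorff \<tau> \<longleftrightarrow> tvs_topology \<tau> \<and> Hausdorff_space \<tau>
     \<and> (\<forall>x U. openin \<tau> U \<and> x \<in> U \<longrightarrow> (\<exists>V. openin \<tau> V \<and> convex V \<and> x \<in> V \<and> V \<subseteq> U))"

definition weak_topology :: "'b::real_inner topology" where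
  "weak_topology = topology_generated_by {{y. y \<bullet> z \<in> U} | z U. open U}"

definition edom :: "('a \<Rightarrow> ereal) \<Rightarrow> 'a set" where
  "edom R = {x. R x < \<infinity>}"

definition proper_fun :: "('a \<Rightarrow> ereal) \<Rightarrow> bool" where
  "proper_fun R \<longleftrightarrow> (\<exists>x. R x < \<infinity>) \<and> (\<forall>x. R x > -\<infinity>)"

definition convex_fun :: "('a::real_vector \<Rightarrow> ereal) \<Rightarrow> bool" where
  "convex_fun R \<longleftrightarrow> (\<forall>x y t. 0 \<le> t \<and> t \<le> 1 \<longrightarrow>
      R ((1 - t) *\<^sub>R x + t *\<^sub>R y) \<le> ereal (1 - t) * R x + ereal t * R y)"

definition Tik :: "('a \<Rightarrow> 'b::real_normed_vector) \<Rightarrow> ('a \<Rightarrow> ereal) \<Rightarrow> real \<Rightarrow> 'a \<Rightarrow> 'b \<Rightarrow> ereal" where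
  "Tik A R \<alpha> x g = ereal (norm (g - A x) ^ 2 / (2 * \<alpha>)) + R x"

definition Rmin :: "('a \<Rightarrow> 'b::real_normed_vector) \<Rightarrow> ('a \<Rightarrow> ereal) \<Rightarrow> real \<Rightarrow> 'b \<Rightarrow> 'a set" where
  "Rmin A R \<alpha> g = {x \<in> edom R. \<forall>y \<in> edom R. Tik A R \<alpha> x g \<le> Tik A R \<alpha> y g}"

definition vartheta :: "('a \<Rightarrow> 'b::real_normed_vector) \<Rightarrow> ('a \<Rightarrow> ereal) \<Rightarrow> 'b \<Rightarrow> real \<Rightarrow> real" where
  "vartheta A R g \<alpha> = real_of_ereal (INF x \<in> edom R. Tik A R \<alpha> x g)"

end

theory Submission
  imports Defs
begin

text \<open>Since the minimiser \<open>x\<^sub>\<alpha>\<close> is admissible for every other parameter \<open>\<beta>\<close>,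
  \<open>\<vartheta>(\<beta>) \<le> \<vartheta>(\<alpha>) + \<parallel>g - A x\<^sub>\<alpha>\<parallel>\<^sup>2/2 \<cdot> (1/\<beta> - 1/\<alpha>)\<close>, with equality at \<open>\<beta> = \<alpha>\<close>; this gives
  monotonicity at once. Convexity follows from the joint convexity of the perspective
  \<open>(u, \<alpha>) \<mapsto> \<parallel>u\<parallel>\<^sup>2/\<alpha>\<close> and of \<open>\<R>\<close>. A convex function touched from above at a point by a
  differentiable function is differentiable there with the same derivative, which yields the
  formula for \<open>\<vartheta>'\<close>. Finally the derivative of a differentiable convex function is monotone,
  and a monotone derivative has no jumps (Darboux), so it is continuous.\<close>

lemma convex_on_has_real_derivative_touching_above:
  fixes f h :: "real \<Rightarrow> real"
  assumes cvx: "convex_on S f" and "open S" "a \<in> S"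
    and below: "\<And>x. x \<in> S \<Longrightarrow> f x \<le> h x" and touch: "f a = h a"
    and h: "(h has_real_derivative d) (at a)"
  shows "(f has_real_derivative d) (at a)"
proof -
  define D where "D b = (f b - f a) / (b - a)" for b
  define Dh where "Dh b = (h b - h a) / (b - a)" for b
  have Dh_lim: "(Dh \<longlongrightarrow> d) (at a within T)" for T
    using has_field_derivative_at_within[OF h] unfolding has_field_derivative_iff Dh_def .
  have near: "\<forall>\<^sub>F b in at a within T. b \<in> S \<and> b \<in> T \<and> b \<noteq> a" for T
    using \<open>open S\<close> \<open>a \<in> S\<close> by (auto simp: eventually_at_topological)
  have incr: "f b - f a \<le> h b - h a" if "b \<in> S" for b
    using below[OF that] touch by simp
  have right: "D b \<le> Dh b" if "b \<in> S" "a < b" for b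
    using incr[OF that(1)] that(2) unfolding D_def Dh_def by (simp add: divide_right_mono)
  have left: "Dh b \<le> D b" if "b \<in> S" "b < a" for b
    using incr[OF that(1)] that(2) unfolding D_def Dh_def by (simp add: divide_right_mono_neg)
  have slope_mono: "D c \<le> D b" if "c \<in> S" "b \<in> S" "c < a" "a < b" for b c
    using convex_on_slope_le[OF cvx that] unfolding D_def
    by (metis (no_types) minus_diff_eq minus_divide_divide order.trans)
  have d_le: "d \<le> D b" if "b \<in> S" "a < b" for b
  proof (rule tendsto_upperbound[OF Dh_lim])
    show "\<forall>\<^sub>F c in at_left a. Dh c \<le> D b"
      using near by eventually_elim (use left slope_mono that in force)
  qed (simp add: trivial_limit_at_left_real)
  have le_d: "D c \<le> d" if "c \<in> S" "c < a" for c
  proof (rule tendsto_lowerbound[OF Dh_lim])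
    show "\<forall>\<^sub>F b in at_right a. D c \<le> Dh b"
      using near by eventually_elim (use right slope_mono that in force)
  qed (simp add: trivial_limit_at_right_real)
  have "(D \<longlongrightarrow> d) (at a)"
  proof (rule tendsto_sandwich[where f="\<lambda>b. min d (Dh b)" and h="\<lambda>b. max d (Dh b)"])
    show "\<forall>\<^sub>F b in at a. min d (Dh b) \<le> D b" "\<forall>\<^sub>F b in at a. D b \<le> max d (Dh b)"
      using near[of UNIV] by (eventually_elim, metis d_le le_d left right linorder_neqE min.coboundedI1
          min.coboundedI2 max.coboundedI1 max.coboundedI2)+
  qed (use tendsto_min[OF tendsto_const Dh_lim[of UNIV], of d]
          tendsto_max[OF tendsto_const Dh_lim[of UNIV], of d] in simp_all)
  then show ?thesis
    unfolding has_field_derivative_iff D_def .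
qed

lemma convex_on_derivative_mono:
  fixes f f' :: "real \<Rightarrow> real"
  assumes cvx: "convex_on S f" and "open S" "connected S"
    and der: "\<And>x. x \<in> S \<Longrightarrow> (f has_real_derivative f' x) (at x)"
  shows "mono_on S f'"
proof (rule mono_onI)
  fix x y assume xy: "x \<in> S" "y \<in> S" "x \<le> y"
  have tangent: "f' c * (z - c) \<le> f z - f c" if "c \<in> S" "z \<in> S" for c z
    using convex_on_imp_above_tangent[OF cvx \<open>connected S\<close> _ that(2)
        has_field_derivative_at_within[OF der[OF that(1)]]]
      that(1) interior_open[OF \<open>open S\<close>] by simp
  have "f' x * (y - x) \<le> f' y * (y - x)"
    using tangent[of x y] tangent[of y x] xy by (simp add: algebra_simps)
  then show "f' x \<le> f' y"
    using xy(3) by (cases "x = y") (auto simp: mult_le_cancel_right)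
qed

lemma mono_derivative_tendsto_at_right:
  fixes f f' :: "real \<Rightarrow> real"
  assumes "a < b" and der: "\<And>x. a \<le> x \<Longrightarrow> x < b \<Longrightarrow> (f has_real_derivative f' x) (at x)"
    and mono: "mono_on {a..<b} f'"
  shows "(f' \<longlongrightarrow> f' a) (at_right a)"
proof (rule order_tendstoI)
  fix c assume "c < f' a"
  from eventually_at_right_real[OF \<open>a < b\<close>] show "\<forall>\<^sub>F x in at_right a. c < f' x"
  proof eventually_elim
    case (elim x)
    then have "f' a \<le> f' x"
      by (intro mono_onD[OF mono]) auto
    with \<open>c < f' a\<close> show ?case by simp
  qed
next
  fix c assume "f' a < c"
  have "((\<lambda>x. (f x - f a) / (x - a)) \<longlongrightarrow> f' a) (at_right a)"
    using has_field_derivative_at_within[OF der[of a]] \<open>a < b\<close>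
    unfolding has_field_derivative_iff by simp
  from order_tendstoD(2)[OF this \<open>f' a < c\<close>] eventually_at_right_real[OF \<open>a < b\<close>]
  have "\<forall>\<^sub>F x in at_right a. (f x - f a) / (x - a) < c \<and> x \<in> {a<..<b}"
    by eventually_elim auto
  then obtain x where x: "(f x - f a) / (x - a) < c" "a < x" "x < b"
    using eventually_happens'[OF trivial_limit_at_right_real] by fastforce
  obtain z where z: "a < z" "z < x" "f x - f a = (x - a) * f' z"
    using MVT2[OF \<open>a < x\<close>, of f f'] der x by fastforce
  have "f' z < c"
    using x z by simp
  from eventually_at_right_real[OF \<open>a < z\<close>] show "\<forall>\<^sub>F y in at_right a. f' y < c"
  proof eventually_elim
    case (elim y)
    then have "f' y \<le> f' z"
      using z x by (intro mono_onD[OF mono]) auto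
    with \<open>f' z < c\<close> show ?case by simp
  qed
qed

lemma mono_derivative_continuous_on:
  fixes f f' :: "real \<Rightarrow> real"
  assumes "open S" and der: "\<And>x. x \<in> S \<Longrightarrow> (f has_real_derivative f' x) (at x)"
    and mono: "mono_on S f'"
  shows "continuous_on S f'"
proof -
  have "isCont f' a" if "a \<in> S" for a
  proof -
    obtain e where "e > 0" and ball: "ball a e \<subseteq> S"
      using \<open>open S\<close> \<open>a \<in> S\<close> open_contains_ball by blast
    have in_S: "x \<in> S" if "\<bar>x - a\<bar> < e" for x
      using ball that by (auto simp: dist_real_def)
    have right: "(f' \<longlongrightarrow> f' a) (at_right a)"
      using \<open>e > 0\<close> in_S
      by (intro mono_derivative_tendsto_at_right[of a "a + e" f] der
          mono_on_subset[OF mono]) auto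
    have "((\<lambda>x. - f' (- x)) \<longlongrightarrow> - f' (- (- a))) (at_right (- a))"
    proof (rule mono_derivative_tendsto_at_right[of "- a" "- a + e" "\<lambda>x. f (- x)"])
      show "((\<lambda>x. f (- x)) has_real_derivative - f' (- x)) (at x)" if "- a \<le> x" "x < - a + e" for x
        using der[of "- x"] in_S[of "- x"] that DERIV_mirror[where f=f and x=x and y="f' (- x)"] by auto
      show "mono_on {- a..<- a + e} (\<lambda>x. - f' (- x))"
        using in_S by (auto intro!: mono_onI mono_onD[OF mono])
    qed (use \<open>e > 0\<close> in simp)
    then have left: "(f' \<longlongrightarrow> f' a) (at_left a)"
      by (simp add: filterlim_at_left_to_right tendsto_minus_cancel_left)
    show ?thesis
      unfolding isCont_def using filterlim_split_at_real[OF left right] .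
  qed
  then show ?thesis
    by (simp add: continuous_on_eq_continuous_at[OF \<open>open S\<close>])
qed

lemma norm_square_perspective_convex:
  fixes u v :: "'a::real_normed_vector"
  assumes x: "x > 0" and y: "y > 0" and t: "0 \<le> t" "t \<le> 1"
  shows "norm ((1 - t) *\<^sub>R u + t *\<^sub>R v)^2 / ((1 - t) * x + t * y)
         \<le> (1 - t) * (norm u^2 / x) + t * (norm v^2 / y)"
proof -
  define a b P Q where "a = (1 - t) * x" and "b = t * y" and "P = norm u / x" and "Q = norm v / y"
  have "a \<ge> 0" "b \<ge> 0"
    using x y t by (simp_all add: a_def b_def)
  have "a + b > 0"
    using x y t by (cases "t = 0") (auto simp: a_def b_def add_nonneg_pos)
  have weighted_cauchy_schwarz: "(a * P + b * Q)^2 \<le> (a + b) * (a * P^2 + b * Q^2)"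
  proof -
    have "(a + b) * (a * P^2 + b * Q^2) - (a * P + b * Q)^2 = a * b * (P - Q)^2"
      by (simp add: power2_eq_square algebra_simps)
    with \<open>a \<ge> 0\<close> \<open>b \<ge> 0\<close> show ?thesis
      by (metis diff_ge_0_iff_ge mult_nonneg_nonneg zero_le_power2)
  qed
  have "norm ((1 - t) *\<^sub>R u + t *\<^sub>R v) \<le> (1 - t) * norm u + t * norm v"
    using norm_triangle_ineq[of "(1 - t) *\<^sub>R u" "t *\<^sub>R v"] t by simp
  also have "\<dots> = a * P + b * Q"
    using x y by (simp add: a_def b_def P_def Q_def)
  finally have "norm ((1 - t) *\<^sub>R u + t *\<^sub>R v)^2 \<le> (a + b) * (a * P^2 + b * Q^2)"
    using weighted_cauchy_schwarz power_mono by (smt (verit) norm_ge_zero)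
  then have "norm ((1 - t) *\<^sub>R u + t *\<^sub>R v)^2 / (a + b) \<le> a * P^2 + b * Q^2"
    using \<open>a + b > 0\<close> by (simp add: divide_le_eq mult.commute)
  also have "a * P^2 + b * Q^2 = (1 - t) * (norm u^2 / x) + t * (norm v^2 / y)"
    using x y by (simp add: a_def b_def P_def Q_def power2_eq_square)
  finally show ?thesis
    by (simp add: a_def b_def)
qed

lemma proper_fun_edom_ereal:
  assumes "proper_fun R" "x \<in> edom R"
  shows "R x = ereal (real_of_ereal (R x))"
  using assms by (cases "R x") (auto simp: proper_fun_def edom_def)

lemma convex_fun_edom_combination:
  assumes proper: "proper_fun R" and "convex_fun R" and x: "x \<in> edom R" and y: "y \<in> edom R"
    and "0 \<le> t" "t \<le> 1"
  shows "(1 - t) *\<^sub>R x + t *\<^sub>R y \<in> edom R"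
    and "real_of_ereal (R ((1 - t) *\<^sub>R x + t *\<^sub>R y))
         \<le> (1 - t) * real_of_ereal (R x) + t * real_of_ereal (R y)"
proof -
  let ?z = "(1 - t) *\<^sub>R x + t *\<^sub>R y"
  have "R ?z \<le> ereal (1 - t) * R x + ereal t * R y"
    using assms(2,5,6) unfolding convex_fun_def by blast
  also have "\<dots> = ereal ((1 - t) * real_of_ereal (R x) + t * real_of_ereal (R y))"
    by (subst proper_fun_edom_ereal[OF proper x], subst proper_fun_edom_ereal[OF proper y]) simp
  finally have Rz: "R ?z \<le> ereal ((1 - t) * real_of_ereal (R x) + t * real_of_ereal (R y))" .
  then show z: "?z \<in> edom R"
    by (auto simp: edom_def intro: le_less_trans)
  show "real_of_ereal (R ?z) \<le> (1 - t) * real_of_ereal (R x) + t * real_of_ereal (R y)"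
    using Rz proper_fun_edom_ereal[OF proper z] by (metis ereal_less_eq(3))
qed

locale tikhonov_selection =
  fixes A :: "'a::real_vector \<Rightarrow> 'b::real_normed_vector"
    and R :: "'a \<Rightarrow> ereal" and g :: 'b and xh :: "real \<Rightarrow> 'a"
  assumes proper: "proper_fun R" and convex: "convex_fun R" and linear: "linear A"
    and selection: "\<And>\<alpha>. \<alpha> > 0 \<Longrightarrow> xh \<alpha> \<in> Rmin A R \<alpha> g"
begin

lemma Tik_real:
  assumes "x \<in> edom R"
  shows "Tik A R \<alpha> x g = ereal (norm (g - A x)^2 / (2 * \<alpha>) + real_of_ereal (R x))"
  using proper_fun_edom_ereal[OF proper assms] by (cases "R x") (simp_all add: Tik_def)

lemma selection_in_edom: "\<alpha> > 0 \<Longrightarrow> xh \<alpha> \<in> edom R"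
  using selection by (simp add: Rmin_def)

lemma vartheta_eq_Tik_selection:
  assumes "\<alpha> > 0"
  shows "ereal (vartheta A R g \<alpha>) = Tik A R \<alpha> (xh \<alpha>) g"
proof -
  have "(INF x \<in> edom R. Tik A R \<alpha> x g) = Tik A R \<alpha> (xh \<alpha>) g"
    using selection[OF assms] by (intro antisym INF_lower INF_greatest) (auto simp: Rmin_def)
  then show ?thesis
    by (simp add: vartheta_def Tik_real selection_in_edom[OF assms])
qed

lemma vartheta_selection:
  "\<alpha> > 0 \<Longrightarrow> vartheta A R g \<alpha> = norm (g - A (xh \<alpha>))^2 / (2 * \<alpha>) + real_of_ereal (R (xh \<alpha>))"
  using vartheta_eq_Tik_selection by (simp add: Tik_real selection_in_edom)

lemma vartheta_le:
  assumes "\<alpha> > 0" "y \<in> edom R"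
  shows "vartheta A R g \<alpha> \<le> norm (g - A y)^2 / (2 * \<alpha>) + real_of_ereal (R y)"
proof -
  have "Tik A R \<alpha> (xh \<alpha>) g \<le> Tik A R \<alpha> y g"
    using selection[OF assms(1)] assms(2) by (simp add: Rmin_def)
  then show ?thesis
    by (simp add: vartheta_eq_Tik_selection[OF assms(1), symmetric] Tik_real assms(2))
qed

lemma vartheta_le_tangent:
  assumes "\<alpha> > 0" "\<beta> > 0"
  shows "vartheta A R g \<beta> \<le> vartheta A R g \<alpha> + norm (g - A (xh \<alpha>))^2 / 2 * (1 / \<beta> - 1 / \<alpha>)"
proof -
  have "norm (g - A (xh \<alpha>))^2 / 2 * (1 / \<beta> - 1 / \<alpha>)
      = norm (g - A (xh \<alpha>))^2 / (2 * \<beta>) - norm (g - A (xh \<alpha>))^2 / (2 * \<alpha>)"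
    by (simp add: right_diff_distrib)
  then show ?thesis
    using vartheta_le[OF assms(2) selection_in_edom[OF assms(1)]] vartheta_selection[OF assms(1)]
    by linarith
qed

lemma vartheta_antimono:
  assumes "0 < \<alpha>" "\<alpha> \<le> \<beta>"
  shows "vartheta A R g \<beta> \<le> vartheta A R g \<alpha>"
proof -
  have "norm (g - A (xh \<alpha>))^2 / 2 * (1 / \<beta> - 1 / \<alpha>) \<le> 0"
    using assms by (intro mult_nonneg_nonpos) (simp_all add: frac_le)
  then show ?thesis
    using vartheta_le_tangent[of \<alpha> \<beta>] assms by linarith
qed

lemma vartheta_convex: "convex_on {0<..} (vartheta A R g)"
proof (rule convex_onI)
  fix t x y :: real assume t: "0 < t" "t < 1" and "x \<in> {0<..}" "y \<in> {0<..}"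
  then have "x > 0" "y > 0" by auto
  define z where "z = (1 - t) *\<^sub>R xh x + t *\<^sub>R xh y"
  have "A z = (1 - t) *\<^sub>R A (xh x) + t *\<^sub>R A (xh y)"
    unfolding z_def using linear by (simp add: linear_add linear_cmul)
  then have "g - A z = (1 - t) *\<^sub>R (g - A (xh x)) + t *\<^sub>R (g - A (xh y))"
    by (simp add: algebra_simps)
  then have "norm (g - A z)^2 / ((1 - t) * x + t * y)
      \<le> (1 - t) * (norm (g - A (xh x))^2 / x) + t * (norm (g - A (xh y))^2 / y)"
    using norm_square_perspective_convex[OF \<open>x > 0\<close> \<open>y > 0\<close>, of t] t by simp
  then have "norm (g - A z)^2 / ((1 - t) * x + t * y) / 2
      \<le> ((1 - t) * (norm (g - A (xh x))^2 / x) + t * (norm (g - A (xh y))^2 / y)) / 2"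
    by (rule divide_right_mono) simp
  then have "norm (g - A z)^2 / (2 * ((1 - t) * x + t * y))
      \<le> (1 - t) * (norm (g - A (xh x))^2 / (2 * x)) + t * (norm (g - A (xh y))^2 / (2 * y))"
    by (simp add: add_divide_distrib ac_simps)
  moreover have "z \<in> edom R"
    "real_of_ereal (R z) \<le> (1 - t) * real_of_ereal (R (xh x)) + t * real_of_ereal (R (xh y))"
    using convex_fun_edom_combination[OF proper convex selection_in_edom selection_in_edom, of x y t]
      \<open>x > 0\<close> \<open>y > 0\<close> t by (simp_all add: z_def)
  moreover have "(1 - t) * x + t * y > 0"
    using \<open>x > 0\<close> \<open>y > 0\<close> t by (simp add: add_pos_pos)
  ultimately show "vartheta A R g ((1 - t) *\<^sub>R x + t *\<^sub>R y)
      \<le> (1 - t) * vartheta A R g x + t * vartheta A R g y"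
    using vartheta_le[of "(1 - t) * x + t * y" z] vartheta_selection[OF \<open>x > 0\<close>]
      vartheta_selection[OF \<open>y > 0\<close>] by (simp add: algebra_simps)
qed (rule convex_real_interval)

lemma vartheta_has_derivative:
  assumes "\<alpha> > 0"
  shows "(vartheta A R g has_real_derivative - (norm (g - A (xh \<alpha>))^2 / (2 * \<alpha>^2))) (at \<alpha>)"
proof (rule convex_on_has_real_derivative_touching_above[OF vartheta_convex open_greaterThan])
  let ?n = "norm (g - A (xh \<alpha>))^2 / 2"
  show "((\<lambda>\<beta>. vartheta A R g \<alpha> + ?n * (1 / \<beta> - 1 / \<alpha>)) has_real_derivative
      - (norm (g - A (xh \<alpha>))^2 / (2 * \<alpha>^2))) (at \<alpha>)"
    using assms by (auto intro!: derivative_eq_intros simp: power2_eq_square)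
qed (use assms vartheta_le_tangent in auto)

lemma vartheta_derivative_continuous:
  "continuous_on {0<..} (\<lambda>\<alpha>. - (norm (g - A (xh \<alpha>))^2 / (2 * \<alpha>^2)))"
  by (intro mono_derivative_continuous_on[OF open_greaterThan, where f = "vartheta A R g"]
      vartheta_has_derivative
      convex_on_derivative_mono[OF vartheta_convex open_greaterThan] convex_connected)
    auto

end

theorem proposition5p3:
  fixes \<tau> :: "'a::banach topology"
    and R :: "'a \<Rightarrow> ereal"
    and A :: "'a \<Rightarrow> 'b::{real_inner, complete_space}"
    and g :: 'b
    and xh :: "real \<Rightarrow> 'a"
  assumes "locally_convex_hausdorff \<tau>"
    and "proper_fun R" and "convex_fun R"
    and "\<And>c::real. compactin \<tau> {x. R x \<le> ereal c}"
    and "linear A" and "continuous_map \<tau> weak_topology A"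
    and "\<And>\<alpha>. \<alpha> > 0 \<Longrightarrow> Rmin A R \<alpha> g \<noteq> {}"
    and "\<And>\<alpha>. \<alpha> > 0 \<Longrightarrow> xh \<alpha> \<in> Rmin A R \<alpha> g"
  shows "(\<forall>\<alpha>>0. ereal (vartheta A R g \<alpha>) = Tik A R \<alpha> (xh \<alpha>) g)
    \<and> convex_on {0<..} (vartheta A R g)
    \<and> (\<forall>\<alpha> \<beta>. 0 < \<alpha> \<and> \<alpha> \<le> \<beta> \<longrightarrow> vartheta A R g \<beta> \<le> vartheta A R g \<alpha>)
    \<and> (\<forall>\<alpha>>0. (vartheta A R g has_real_derivative
          - (norm (g - A (xh \<alpha>)) ^ 2 / (2 * \<alpha> ^ 2))) (at \<alpha>))
    \<and> continuous_on {0<..} (\<lambda>\<alpha>. - (norm (g - A (xh \<alpha>)) ^ 2 / (2 * \<alpha> ^ 2)))"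
proof -
  \<comment> \<open>The topological hypotheses only serve to guarantee minimisers; \<open>xh\<close> already selects them.\<close>
  interpret tikhonov_selection A R g xh
    using assms(2,3,5,8) by (simp add: tikhonov_selection_def)
  show ?thesis
    using vartheta_eq_Tik_selection vartheta_convex vartheta_antimono vartheta_has_derivative
      vartheta_derivative_continuous
    by auto
qed

end
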